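(* Consider the ReLU network with skipped connections, training data $(x^{(i)},y^{(i)})_{i=1}^T$ and cost $C=\frac12\sum_{i=1}^T\|F(x^{(i)})-y^{(i)}\|^2$. Suppose there exists $l\in[\kappa]$ such that (i) the skipped features $\chi^l(x^{(1)}),\dots,\chi^l(x^{(T)})\in\mathbb R^{s_l}$ are linearly independent, and (ii) $\tilde\Upsilon^{l-1}(x^{(i)})\tilde\Lambda^l(x^{(i)})\in\mathbb R^{d_0\times d_{l-1}}$ has full row rank for every $i\in[T]$. Then $\nabla_{\tilde S^l}C=0$ if and only if $F(x^{(i)})=y^{(i)}$ for all $i\in[T]$ (i.e. $C=0$).
   Context: $\otimes$ is the Kronecker product, $\sigma(t)=\max(t,0)$ entrywise, $[n]=\{1,\dots,n\}$. Network with skipped connections on inputs $x\in\mathbb R^{d_0}$, with layer dimensions $d_0,\dots,d_\kappa$ and skip dimensions $s_1,\dots,s_\kappa$: given matrices $E^l\in\mathbb R^{d_{l-1}\times d_l}$, $D^l\in\mathbb R^{d_{l-1}\times d_l}$, $S^l\in\mathbb R^{d_{l-1}\times s_l}$, $\tilde S^l\in\mathbb R^{d_{l-1}\times s_l}$ ($l\in[\kappa]$), define $\xi^0=x$, $\xi^l=\sigma(E^{l\top}\xi^{l-1})$, $\chi^l=\sigma(S^{l\top}\xi^{l-1})$, $\tilde\xi^\kappa=\xi^\kappa$, $\tilde\xi^{l-1}=\sigma(D^l\tilde\xi^l+\tilde S^l\chi^l)$ (decoder pre-activation at layer $l$: $D^l\tilde\xi^l+\tilde S^l\chi^l$), $F(x)=\tilde\xi^0$.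 $\tilde\Lambda^l(x)\in\mathbb R^{d_{l-1}\times d_{l-1}}$ is diagonal with $i$-th entry $1$ if the $i$-th decoder pre-activation at layer $l$ is $>0$ and $0$ otherwise; $\tilde\Upsilon^0=I_{d_0}$, $\tilde\Upsilon^l(x)=\tilde\Upsilon^{l-1}(x)\tilde\Lambda^l(x)D^l$. The gradient with respect to $\tilde S^l$ (treated as a free matrix) is defined by the chain-rule expression $$\nabla_{\tilde S^l}C:=\sum_{i=1}^T\big(\chi^l(x^{(i)})\otimes I_{d_{l-1}}\big)\,\tilde\Lambda^l(x^{(i)})\,\tilde\Upsilon^{l-1}(x^{(i)})^\top\big(F(x^{(i)})-y^{(i)}\big)\in\mathbb R^{s_ld_{l-1}},$$ which coincides with the true gradient with respect to $\mathrm{vec}(\tilde S^l)$ whenever no decoder pre-activation at layers $1,\dots,l$ vanishes at any training input. *)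

theory Defs
  imports "Jordan_Normal_Form.Matrix" "Jordan_Normal_Form.DL_Rank"
begin

definition relu :: "real vec \<Rightarrow> real vec" where
  "relu v = map_vec (\<lambda>t. max t 0) v"

definition kron :: "real mat \<Rightarrow> real mat \<Rightarrow> real mat" where
  "kron A B = mat (dim_row A * dim_row B) (dim_col A * dim_col B)
     (\<lambda>(i,j). A $$ (i div dim_row B, j div dim_col B) * B $$ (i mod dim_row B, j mod dim_col B))"

fun enc :: "(nat \<Rightarrow> real mat) \<Rightarrow> real vec \<Rightarrow> nat \<Rightarrow> real vec" where
  "enc E x 0 = x"
| "enc E x (Suc l) = relu (transpose_mat (E (Suc l)) *\<^sub>v enc E x l)"

definition skipf :: "(nat \<Rightarrow> real mat) \<Rightarrow> (nat \<Rightarrow> real mat) \<Rightarrow> real vec \<Rightarrow> nat \<Rightarrow> real vec" where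
  "skipf E S x l = relu (transpose_mat (S l) *\<^sub>v enc E x (l - 1))"

text \<open>dec_aux ... m = tilde xi^(kappa - m)(x).\<close>
fun dec_aux :: "nat \<Rightarrow> (nat \<Rightarrow> real mat) \<Rightarrow> (nat \<Rightarrow> real mat) \<Rightarrow> (nat \<Rightarrow> real mat)
    \<Rightarrow> (nat \<Rightarrow> real mat) \<Rightarrow> real vec \<Rightarrow> nat \<Rightarrow> real vec" where
  "dec_aux \<kappa> E D S St x 0 = enc E x \<kappa>"
| "dec_aux \<kappa> E D S St x (Suc m) =
     relu (D (\<kappa> - m) *\<^sub>v dec_aux \<kappa> E D S St x m + St (\<kappa> - m) *\<^sub>v skipf E S x (\<kappa> - m))"

definition dec :: "nat \<Rightarrow> (nat \<Rightarrow> real mat) \<Rightarrow> (nat \<Rightarrow> real mat) \<Rightarrow> (nat \<Rightarrow> real mat)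
    \<Rightarrow> (nat \<Rightarrow> real mat) \<Rightarrow> real vec \<Rightarrow> nat \<Rightarrow> real vec" where
  "dec \<kappa> E D S St x l = dec_aux \<kappa> E D S St x (\<kappa> - l)"

definition net :: "nat \<Rightarrow> (nat \<Rightarrow> real mat) \<Rightarrow> (nat \<Rightarrow> real mat) \<Rightarrow> (nat \<Rightarrow> real mat)
    \<Rightarrow> (nat \<Rightarrow> real mat) \<Rightarrow> real vec \<Rightarrow> real vec" where
  "net \<kappa> E D S St x = dec \<kappa> E D S St x 0"

definition preact :: "nat \<Rightarrow> (nat \<Rightarrow> real mat) \<Rightarrow> (nat \<Rightarrow> real mat) \<Rightarrow> (nat \<Rightarrow> real mat)
    \<Rightarrow> (nat \<Rightarrow> real mat) \<Rightarrow> real vec \<Rightarrow> nat \<Rightarrow> real vec" where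
  "preact \<kappa> E D S St x l = D l *\<^sub>v dec \<kappa> E D S St x l + St l *\<^sub>v skipf E S x l"

definition Lam :: "nat \<Rightarrow> (nat \<Rightarrow> real mat) \<Rightarrow> (nat \<Rightarrow> real mat) \<Rightarrow> (nat \<Rightarrow> real mat)
    \<Rightarrow> (nat \<Rightarrow> real mat) \<Rightarrow> real vec \<Rightarrow> nat \<Rightarrow> real mat" where
  "Lam \<kappa> E D S St x l =
     (let p = preact \<kappa> E D S St x l
      in mat (dim_vec p) (dim_vec p) (\<lambda>(i,j). if i = j \<and> p $ i > 0 then 1 else 0))"

fun Ups :: "nat \<Rightarrow> nat \<Rightarrow> (nat \<Rightarrow> real mat) \<Rightarrow> (nat \<Rightarrow> real mat) \<Rightarrow> (nat \<Rightarrow> real mat)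
    \<Rightarrow> (nat \<Rightarrow> real mat) \<Rightarrow> real vec \<Rightarrow> nat \<Rightarrow> real mat" where
  "Ups d0 \<kappa> E D S St x 0 = 1\<^sub>m d0"
| "Ups d0 \<kappa> E D S St x (Suc l) =
     Ups d0 \<kappa> E D S St x l * Lam \<kappa> E D S St x (Suc l) * D (Suc l)"

text \<open>Chain-rule gradient w.r.t. tilde S^l, a vector in R^(s_l d_{l-1}).\<close>
definition grad_St :: "nat \<Rightarrow> nat \<Rightarrow> (nat \<Rightarrow> real mat) \<Rightarrow> (nat \<Rightarrow> real mat) \<Rightarrow> (nat \<Rightarrow> real mat)
    \<Rightarrow> (nat \<Rightarrow> real mat) \<Rightarrow> nat \<Rightarrow> (nat \<Rightarrow> real vec) \<Rightarrow> (nat \<Rightarrow> real vec) \<Rightarrow> nat \<Rightarrow> real vec" where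
  "grad_St d0 \<kappa> E D S St T xs ys l =
     vec (dim_col (S l) * dim_row (S l))
       (\<lambda>k. \<Sum>i\<in>{1..T}.
          (kron (mat_of_cols (dim_col (S l)) [skipf E S (xs i) l]) (1\<^sub>m (dim_row (S l)))
            *\<^sub>v (Lam \<kappa> E D S St (xs i) l
                 *\<^sub>v (transpose_mat (Ups d0 \<kappa> E D S St (xs i) (l - 1))
                      *\<^sub>v (net \<kappa> E D S St (xs i) - ys i)))) $ k)"

definition cost :: "nat \<Rightarrow> (nat \<Rightarrow> real mat) \<Rightarrow> (nat \<Rightarrow> real mat) \<Rightarrow> (nat \<Rightarrow> real mat)
    \<Rightarrow> (nat \<Rightarrow> real mat) \<Rightarrow> nat \<Rightarrow> (nat \<Rightarrow> real vec) \<Rightarrow> (nat \<Rightarrow> real vec) \<Rightarrow> real" where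
  "cost \<kappa> E D S St T xs ys =
     (1/2) * (\<Sum>i\<in>{1..T}. (net \<kappa> E D S St (xs i) - ys i) \<bullet> (net \<kappa> E D S St (xs i) - ys i))"

definition lin_indep_family :: "nat \<Rightarrow> nat \<Rightarrow> (nat \<Rightarrow> real vec) \<Rightarrow> bool" where
  "lin_indep_family n T v \<longleftrightarrow>
     (\<forall>c :: nat \<Rightarrow> real.
        (\<forall>k<n. (\<Sum>i\<in>{1..T}. c i * v i $ k) = 0) \<longrightarrow> (\<forall>i\<in>{1..T}. c i = 0))"

end

theory Submission
  imports Defs
begin

text \<open>The gradient is the vectorisation of \<open>\<Sum>\<^sub>i \<chi>(x\<^sub>i) \<otimes> e\<^sub>i\<close>, where
  \<open>e\<^sub>i = (\<Upsilon> \<Lambda>)\<^sup>T (F(x\<^sub>i) - y\<^sub>i)\<close> because \<open>\<Lambda>\<close> is a symmetric 0/1 diagonal matrix.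
  Every coordinate of this sum is a linear combination of the independent features \<open>\<chi>(x\<^sub>i)\<close>,
  so it vanishes iff all \<open>e\<^sub>i\<close> vanish; and a matrix of full row rank has an injective transpose,
  so \<open>e\<^sub>i = 0\<close> iff \<open>F(x\<^sub>i) = y\<^sub>i\<close>.\<close>

lemma (in vec_space) span_cols_full_rank:
  assumes A: "A \<in> carrier_mat n nc" and rk: "rank A = n"
  shows "span (set (cols A)) = carrier_vec n"
proof -
  obtain B where B: "maximal B (\<lambda>C. C \<subseteq> set (cols A) \<and> lin_indpt C)"
    using maximal_exists[of "\<lambda>C. C \<subseteq> set (cols A) \<and> lin_indpt C" "card (set (cols A))" "{}"]
    by (meson List.finite_set card_mono empty_iff empty_subsetI finite_lin_indpt2 rev_finite_subset)
  have B_sub: "B \<subseteq> set (cols A)" and B_indpt: "lin_indpt B"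
    using B unfolding maximal_def by auto
  have B_carrier: "B \<subseteq> carrier_vec n" using B_sub cols_dim A by blast
  have "card B = n" using rank_card_indpt[OF A B] rk by simp
  then have "basis B"
    using B_sub B_indpt B_carrier by (intro dim_li_is_basis) (auto simp: dim_is_n intro: finite_subset)
  then have "span B = carrier_vec n" unfolding basis_def by auto
  moreover have "span B \<subseteq> span (set (cols A))"
    using B_sub by (rule span_is_monotone)
  moreover have "span (set (cols A)) \<subseteq> carrier_vec n"
    using A cols_dim[of A] by (auto intro: span_closed)
  ultimately show ?thesis by blast
qed

lemma (in vec_space) full_rank_transpose_mult_vec_eq_0_iff:
  assumes A: "A \<in> carrier_mat n nc" and rk: "rank A = n" and r: "r \<in> carrier_vec n"
  shows "transpose_mat A *\<^sub>v r = 0\<^sub>v nc \<longleftrightarrow> r = 0\<^sub>v n"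
proof
  assume At_r: "transpose_mat A *\<^sub>v r = 0\<^sub>v nc"
  have "r \<in> orthogonal_complement (set (cols A))"
    unfolding orthogonal_complement_def
  proof (safe intro!: r)
    fix c assume "c \<in> set (cols A)"
    then obtain j where j: "j < nc" "c = col A j" using A by (auto simp: in_set_conv_nth)
    have "c \<bullet> r = 0"
      using arg_cong[OF At_r, of "\<lambda>v. v $ j"] j A by simp
    then show "r \<bullet> c = 0" using comm_scalar_prod[OF r] j A by simp
  qed
  then have r_orth: "r \<in> orthogonal_complement (carrier_vec n)"
    using span_cols_full_rank[OF A rk] A
    by (metis in_orthogonal_complement_span cols_dim carrier_matD(1))
  show "r = 0\<^sub>v n"
  proof (rule eq_vecI)
    fix k assume "k < dim_vec (0\<^sub>v n :: 'a vec)"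
    then show "r $ k = 0\<^sub>v n $ k"
      using r_orth r unfolding orthogonal_complement_def
      by (auto dest!: bspec[of _ _ "unit_vec n k"] simp: scalar_prod_right_unit)
  qed (use r in simp)
qed (use A in \<open>auto intro: eq_vecI\<close>)

lemma kron_mat_of_col_one_mult_vec_index:
  fixes c w :: "real vec"
  assumes c: "c \<in> carrier_vec p" and w: "w \<in> carrier_vec q" and k: "k < p * q"
  shows "(kron (mat_of_cols p [c]) (1\<^sub>m q) *\<^sub>v w) $ k = c $ (k div q) * w $ (k mod q)"
proof -
  have q: "q > 0" using k by (cases q) auto
  have k_div: "k div q < p" using k by (simp add: less_mult_imp_div_less)
  have "(kron (mat_of_cols p [c]) (1\<^sub>m q) *\<^sub>v w) $ k
      = (\<Sum>j<q. c $ (k div q) * (if k mod q = j then 1 else 0) * w $ j)"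
    using k w k_div q unfolding kron_def
    by (auto simp: mult_mat_vec_def scalar_prod_def row_def mat_of_cols_def atLeast0LessThan
        intro!: sum.cong)
  also have "\<dots> = (\<Sum>j<q. if j = k mod q then c $ (k div q) * w $ j else 0)"
    by (rule sum.cong) auto
  also have "\<dots> = c $ (k div q) * w $ (k mod q)"
    using q by simp
  finally show ?thesis .
qed

text \<open>The vector below is the row-major vectorisation of \<open>\<Sum>\<^sub>i c\<^sub>i w\<^sub>i\<^sup>T\<close>.\<close>

lemma vec_sum_outer_eq_0_iff:
  fixes c w :: "nat \<Rightarrow> real vec"
  assumes indep: "lin_indep_family p T c" and w: "\<And>i. i \<in> {1..T} \<Longrightarrow> w i \<in> carrier_vec q"
  shows "vec (p * q) (\<lambda>k. \<Sum>i\<in>{1..T}. c i $ (k div q) * w i $ (k mod q)) = 0\<^sub>v (p * q)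
    \<longleftrightarrow> (\<forall>i\<in>{1..T}. w i = 0\<^sub>v q)" (is "?outer = _ \<longleftrightarrow> _")
proof
  assume outer: "?outer = 0\<^sub>v (p * q)"
  have "w i $ b = 0" if i: "i \<in> {1..T}" and b: "b < q" for i b
  proof -
    have combination_0: "\<forall>a<p. (\<Sum>i\<in>{1..T}. w i $ b * c i $ a) = 0"
    proof (intro allI impI)
      fix a assume a: "a < p"
      have "a * q + b < Suc a * q" using b by simp
      also have "\<dots> \<le> p * q" using a by (intro mult_right_mono) auto
      finally have ab: "a * q + b < p * q" .
      have "?outer $ (a * q + b) = 0" using outer ab by simp
      then show "(\<Sum>i\<in>{1..T}. w i $ b * c i $ a) = 0" using ab b by (simp add: mult.commute)
    qed
    show ?thesis
      using indep[unfolded lin_indep_family_def, THEN spec[of _ "\<lambda>i. w i $ b"], THEN mp,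
          OF combination_0] i
      by blast
  qed
  then show "\<forall>i\<in>{1..T}. w i = 0\<^sub>v q" using w by (auto intro!: eq_vecI)
next
  assume w0: "\<forall>i\<in>{1..T}. w i = 0\<^sub>v q"
  show "?outer = 0\<^sub>v (p * q)"
  proof (intro eq_vecI)
    fix k assume "k < dim_vec (0\<^sub>v (p * q) :: real vec)"
    then have "k mod q < q" by (cases q) auto
    then show "?outer $ k = 0\<^sub>v (p * q) $ k" using \<open>k < _\<close> w0 by simp
  qed simp
qed

definition backprop_error :: "nat \<Rightarrow> nat \<Rightarrow> (nat \<Rightarrow> real mat) \<Rightarrow> (nat \<Rightarrow> real mat)
    \<Rightarrow> (nat \<Rightarrow> real mat) \<Rightarrow> (nat \<Rightarrow> real mat) \<Rightarrow> real vec \<Rightarrow> real vec \<Rightarrow> nat \<Rightarrow> real vec" where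
  "backprop_error d0 \<kappa> E D S St x y l =
     Lam \<kappa> E D S St x l *\<^sub>v (transpose_mat (Ups d0 \<kappa> E D S St x (l - 1)) *\<^sub>v (net \<kappa> E D S St x - y))"

lemma Lam_carrier: "Lam \<kappa> E D S St x l \<in> carrier_mat (dim_row (St l)) (dim_row (St l))"
  unfolding Lam_def Let_def preact_def by simp

lemma transpose_Lam: "transpose_mat (Lam \<kappa> E D S St x l) = Lam \<kappa> E D S St x l"
  unfolding Lam_def Let_def by (rule eq_matI) auto

lemma Ups_carrier:
  assumes dimD: "\<And>j. j \<in> {1..\<kappa>} \<Longrightarrow> D j \<in> carrier_mat (d (j - 1)) (d j)" and "j \<le> \<kappa>"
  shows "Ups (d 0) \<kappa> E D S St x j \<in> carrier_mat (d 0) (d j)"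
  using \<open>j \<le> \<kappa>\<close>
proof (induction j)
  case (Suc j)
  then have "D (Suc j) \<in> carrier_mat (d j) (d (Suc j))" using dimD[of "Suc j"] by auto
  with Suc show ?case by auto
qed simp

lemma dim_net: "0 < \<kappa> \<Longrightarrow> dim_vec (net \<kappa> E D S St x) = dim_row (St 1)"
  by (cases \<kappa>) (simp_all add: net_def dec_def relu_def)

lemma backprop_error_carrier:
  "backprop_error d0 \<kappa> E D S St x y l \<in> carrier_vec (dim_row (St l))"
  using carrier_matD(1)[OF Lam_carrier[of \<kappa> E D S St x l]]
  unfolding backprop_error_def carrier_vec_def by (simp only: mem_Collect_eq dim_mult_mat_vec)

lemma grad_St_eq_vec_sum_outer:
  assumes "dim_row (St l) = dim_row (S l)"
  shows "grad_St d0 \<kappa> E D S St T xs ys l = vec (dim_col (S l) * dim_row (S l))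
    (\<lambda>k. \<Sum>i\<in>{1..T}. skipf E S (xs i) l $ (k div dim_row (S l))
                      * backprop_error d0 \<kappa> E D S St (xs i) (ys i) l $ (k mod dim_row (S l)))"
proof -
  have chi: "skipf E S (xs i) l \<in> carrier_vec (dim_col (S l))" for i
    unfolding skipf_def relu_def carrier_vec_def
    by (simp only: mem_Collect_eq index_map_vec(2) dim_mult_mat_vec index_transpose_mat(2,3))
  have err: "backprop_error d0 \<kappa> E D S St (xs i) (ys i) l \<in> carrier_vec (dim_row (S l))" for i
    using backprop_error_carrier assms by metis
  show ?thesis
    unfolding grad_St_def backprop_error_def[symmetric]
    by (intro eq_vecI) (simp_all add: kron_mat_of_col_one_mult_vec_index[OF chi err])
qed

lemma backprop_error_eq_0_iff:
  assumes Ups: "Ups d0 \<kappa> E D S St x (l - 1) \<in> carrier_mat d0 m"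
    and Lam: "dim_row (St l) = m"
    and rank: "vec_space.rank d0 (Ups d0 \<kappa> E D S St x (l - 1) * Lam \<kappa> E D S St x l) = d0"
    and net: "net \<kappa> E D S St x \<in> carrier_vec d0" and y: "y \<in> carrier_vec d0"
  shows "backprop_error d0 \<kappa> E D S St x y l = 0\<^sub>v m \<longleftrightarrow> net \<kappa> E D S St x = y"
proof -
  let ?U = "Ups d0 \<kappa> E D S St x (l - 1)" and ?L = "Lam \<kappa> E D S St x l"
    and ?r = "net \<kappa> E D S St x - y"
  have L: "?L \<in> carrier_mat m m" using Lam_carrier[of \<kappa> E D S St x l] Lam by simp
  have r: "?r \<in> carrier_vec d0" using net y by simp
  have "backprop_error d0 \<kappa> E D S St x y l = transpose_mat (?U * ?L) *\<^sub>v ?r"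
    using Ups L r
    by (simp add: backprop_error_def transpose_mult transpose_Lam assoc_mult_mat_vec[of _ m m _ d0])
  also have "\<dots> = 0\<^sub>v m \<longleftrightarrow> ?r = 0\<^sub>v d0"
    using vec_space.full_rank_transpose_mult_vec_eq_0_iff[OF mult_carrier_mat[OF Ups L] rank r] .
  also have "\<dots> \<longleftrightarrow> net \<kappa> E D S St x = y"
  proof
    assume r0: "?r = 0\<^sub>v d0"
    show "net \<kappa> E D S St x = y"
    proof (rule eq_vecI)
      fix i assume "i < dim_vec y"
      then show "net \<kappa> E D S St x $ i = y $ i" using arg_cong[OF r0, of "\<lambda>v. v $ i"] y by simp
    qed (use net y in simp)
  qed (use y in simp)
  finally show ?thesis .
qed

theorem theorem2:
  fixes \<kappa> T :: nat and d s :: "nat \<Rightarrow> nat"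
    and E D S St :: "nat \<Rightarrow> real mat"
    and xs ys :: "nat \<Rightarrow> real vec"
    and l :: nat
  assumes dimE: "\<And>j. j \<in> {1..\<kappa>} \<Longrightarrow> E j \<in> carrier_mat (d (j - 1)) (d j)"
    and dimD: "\<And>j. j \<in> {1..\<kappa>} \<Longrightarrow> D j \<in> carrier_mat (d (j - 1)) (d j)"
    and dimS: "\<And>j. j \<in> {1..\<kappa>} \<Longrightarrow> S j \<in> carrier_mat (d (j - 1)) (s j)"
    and dimSt: "\<And>j. j \<in> {1..\<kappa>} \<Longrightarrow> St j \<in> carrier_mat (d (j - 1)) (s j)"
    and dimx: "\<And>i. i \<in> {1..T} \<Longrightarrow> xs i \<in> carrier_vec (d 0)"
    and dimy: "\<And>i. i \<in> {1..T} \<Longrightarrow> ys i \<in> carrier_vec (d 0)"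
    and l: "l \<in> {1..\<kappa>}"
    and indep: "lin_indep_family (s l) T (\<lambda>i. skipf E S (xs i) l)"
    and fullrank: "\<And>i. i \<in> {1..T} \<Longrightarrow>
        vec_space.rank (d 0) (Ups (d 0) \<kappa> E D S St (xs i) (l - 1) * Lam \<kappa> E D S St (xs i) l) = d 0"
  shows "grad_St (d 0) \<kappa> E D S St T xs ys l = 0\<^sub>v (s l * d (l - 1))
     \<longleftrightarrow> (\<forall>i\<in>{1..T}. net \<kappa> E D S St (xs i) = ys i)"
proof -
  let ?err = "\<lambda>i. backprop_error (d 0) \<kappa> E D S St (xs i) (ys i) l"
  have S_l: "dim_row (S l) = d (l - 1)" "dim_col (S l) = s l" and St_l: "dim_row (St l) = d (l - 1)"
    using carrier_matD[OF dimS[OF l]] carrier_matD[OF dimSt[OF l]] by simp_all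
  have "0 < \<kappa>" "1 \<in> {1..\<kappa>}" using l by auto
  then have net: "net \<kappa> E D S St x \<in> carrier_vec (d 0)" for x
    using dim_net carrier_matD(1)[OF dimSt] unfolding carrier_vec_def by fastforce
  have err: "?err i \<in> carrier_vec (d (l - 1))" for i
    using backprop_error_carrier St_l by metis
  have err_0_iff: "?err i = 0\<^sub>v (d (l - 1)) \<longleftrightarrow> net \<kappa> E D S St (xs i) = ys i" if i: "i \<in> {1..T}" for i
    using l St_l
    by (intro backprop_error_eq_0_iff Ups_carrier[where d = d, OF dimD] fullrank[OF i] net dimy[OF i]) auto
  have "grad_St (d 0) \<kappa> E D S St T xs ys l
      = vec (s l * d (l - 1)) (\<lambda>k. \<Sum>i\<in>{1..T}. skipf E S (xs i) l $ (k div d (l - 1)) * ?err i $ (k mod d (l - 1)))"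
    unfolding grad_St_eq_vec_sum_outer[of St l S, OF St_l[folded S_l(1)]] S_l ..
  then show ?thesis
    using vec_sum_outer_eq_0_iff[OF indep, of ?err] err err_0_iff by simp
qed

end
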